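(* For every integer $n\ge0$, $$\sum_{i=0}^n-{n\brace i}(-2)^{-2i}=(-2)^{-2n-1}.$$
   Context: The Euler polynomials $E_n(x)$ are defined by $\frac{2e^{xt}}{e^t+1}=\sum_{n\ge0}E_n(x)\frac{t^n}{n!}$. For $N\ge0$, the numbers ${N\brace j}$ ($0\le j\le N$) are defined by $\sum_{j=0}^N{N\brace j}x^{2j}=x^{2N+1}-E_{2N+1}(x)$. *)

theory Defs
  imports Complex_Main "HOL-Computational_Algebra.Formal_Power_Series"
begin

definition euler_poly :: "nat \<Rightarrow> real \<Rightarrow> real" where
  "euler_poly n x = fact n * fps_nth (fps_const 2 * fps_exp x / (fps_exp 1 + 1)) n"

definition euler_brace :: "nat \<Rightarrow> nat \<Rightarrow> real" where
  "euler_brace N = (THE c. (\<forall>x::real. (\<Sum>j=0..N. c j * x ^ (2*j))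
       = x ^ (2*N+1) - euler_poly (2*N+1) x) \<and> (\<forall>j>N. c j = 0))"

end

theory Submission
  imports Defs
begin

text \<open>Let G_x(t) = 2 e^(xt) / (e^t + 1). The identities G_x = e^(xt) G_0,
  G_x + G_(x+1) = 2 e^(xt) and G_x(-t) = G_(1-x)(t) give the binomial expansion
  E_n(x) = sum_i (n choose i) E_(n-i)(0) x^i, the vanishing of E_k(0) for even k > 0, and
  E_n(1/2) = 0 for odd n. The first two facts make x^(2N+1) - E_(2N+1)(x) an even polynomial,
  with coefficients {N brace j} = -(2N+1 choose 2j) E_(2N+1-2j)(0). As (-2)^(-2i) = (1/2)^(2i),
  the sum in question is minus that polynomial at x = 1/2, namely
  E_(2n+1)(1/2) - (1/2)^(2n+1) = (-1/2)^(2n+1).\<close>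

unbundle fps_syntax

definition euler_gf :: "'a::field_char_0 \<Rightarrow> 'a fps" where
  "euler_gf x = fps_const 2 * fps_exp x / (fps_exp 1 + 1)"

lemma euler_poly_eq_euler_gf_nth: "euler_poly n x = fact n * euler_gf x $ n"
  unfolding euler_poly_def euler_gf_def ..

lemma is_unit_fps_exp_plus_one: "is_unit (fps_exp 1 + 1 :: 'a::field_char_0 fps)"
  by simp

lemma mult_fps_exp_plus_one_cancel:
  "f * (fps_exp 1 + 1) = g * (fps_exp 1 + 1) \<longleftrightarrow> f = (g :: 'a::field_char_0 fps)"
  using is_unit_fps_exp_plus_one by (metis mult_right_cancel not_is_unit_0)

lemma euler_gf_mult_denom: "euler_gf x * (fps_exp 1 + 1) = fps_const 2 * fps_exp x"
  unfolding euler_gf_def using is_unit_fps_exp_plus_one by (simp add: unit_div_mult_self)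

lemma euler_gfI: "f * (fps_exp 1 + 1) = fps_const 2 * fps_exp x \<Longrightarrow> f = euler_gf x"
  by (metis euler_gf_mult_denom mult_fps_exp_plus_one_cancel)

lemma euler_gf_nth_0 [simp]: "euler_gf x $ 0 = 1"
  using arg_cong[OF euler_gf_mult_denom[of x], of "\<lambda>f. f $ 0"] by simp

lemma euler_gf_eq_fps_exp_mult: "euler_gf x = fps_exp x * euler_gf 0"
  by (rule sym, rule euler_gfI) (simp add: mult.assoc euler_gf_mult_denom mult.commute)

lemma euler_gf_add_euler_gf_plus_one: "euler_gf x + euler_gf (x + 1) = fps_const 2 * fps_exp x"
proof -
  have "(euler_gf x + euler_gf (x + 1)) * (fps_exp 1 + 1)
        = fps_const 2 * fps_exp x + fps_const 2 * fps_exp (x + 1)"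
    by (simp only: distrib_right euler_gf_mult_denom)
  also have "\<dots> = fps_const 2 * fps_exp x * (fps_exp 1 + 1)"
    by (simp add: fps_exp_add_mult algebra_simps)
  finally show ?thesis
    by (simp only: mult_fps_exp_plus_one_cancel)
qed

lemma euler_gf_compose_uminus: "euler_gf x oo - fps_X = euler_gf (1 - x)"
proof (rule euler_gfI)
  have "(euler_gf x oo - fps_X) * (fps_exp (-1) + 1) = fps_const 2 * fps_exp (-x)"
    using arg_cong[OF euler_gf_mult_denom[of x], of "\<lambda>f. f oo - fps_X"]
    by (simp add: fps_compose_mult_distrib[of "- fps_X"] fps_compose_add_distrib)
  moreover have "(fps_exp (-1) + 1) * fps_exp 1 = (fps_exp 1 + 1 :: 'a fps)"
    by (simp add: distrib_right add.commute flip: fps_exp_add_mult)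
  moreover have "fps_exp (-x) * fps_exp 1 = fps_exp (1 - x)"
    by (simp flip: fps_exp_add_mult)
  ultimately show "(euler_gf x oo - fps_X) * (fps_exp 1 + 1) = fps_const 2 * fps_exp (1 - x)"
    by (metis mult.assoc)
qed

lemma euler_gf_nth_reflect: "euler_gf (1 - x) $ n = (-1) ^ n * euler_gf x $ n"
proof -
  have "euler_gf (1 - x) $ n = (euler_gf x oo - fps_X) $ n"
    by (simp only: euler_gf_compose_uminus)
  then show ?thesis
    by (simp only: fps_compose_uminus' fps_nth_Abs_fps)
qed

lemma euler_gf_zero_nth_even:
  assumes "even k" "k \<noteq> 0"
  shows "euler_gf (0::'a::field_char_0) $ k = 0"
proof -
  have "euler_gf 0 $ k + euler_gf (1::'a) $ k = 0"
    using arg_cong[OF euler_gf_add_euler_gf_plus_one[of "0::'a"], of "\<lambda>f. f $ k"] assms(2)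
    by simp
  then show ?thesis
    using euler_gf_nth_reflect[of "0::'a" k] assms(1) by simp
qed

lemma euler_poly_reflect: "euler_poly n (1 - x) = (-1) ^ n * euler_poly n x"
  by (simp add: euler_poly_eq_euler_gf_nth euler_gf_nth_reflect)

lemma euler_poly_odd_half: "odd n \<Longrightarrow> euler_poly n (1/2) = 0"
  using euler_poly_reflect[of n "1/2"] by simp

lemma euler_poly_0_left [simp]: "euler_poly 0 x = 1"
  by (simp add: euler_poly_eq_euler_gf_nth)

lemma euler_poly_zero_even: "even k \<Longrightarrow> k \<noteq> 0 \<Longrightarrow> euler_poly k 0 = 0"
  by (simp add: euler_poly_eq_euler_gf_nth euler_gf_zero_nth_even)

lemma euler_poly_binomial:
  "euler_poly n x = (\<Sum>i\<le>n. of_nat (n choose i) * euler_poly (n - i) 0 * x ^ i)"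
proof -
  have "euler_poly n x = fact n * (\<Sum>i\<le>n. x ^ i / fact i * euler_gf 0 $ (n - i))"
    by (simp add: euler_poly_eq_euler_gf_nth euler_gf_eq_fps_exp_mult[of x] fps_mult_nth
        atLeast0AtMost)
  also have "\<dots> = (\<Sum>i\<le>n. of_nat (n choose i) * euler_poly (n - i) 0 * x ^ i)"
    unfolding sum_distrib_left
    by (intro sum.cong) (simp_all add: euler_poly_eq_euler_gf_nth binomial_fact field_simps)
  finally show ?thesis .
qed

lemma euler_poly_odd_expansion:
  "euler_poly (2*N+1) x
     = x ^ (2*N+1) + (\<Sum>j\<le>N. of_nat (2*N+1 choose 2*j) * euler_poly (2*N+1 - 2*j) 0 * x ^ (2*j))"
proof -
  define a where "a i = of_nat (2*N+1 choose i) * euler_poly (2*N+1 - i) 0 * x ^ i" for i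
  have odd_terms: "a (Suc (2*j)) = (if j = N then x ^ (2*N+1) else 0)" if "j \<le> N" for j
    using that by (auto simp: a_def euler_poly_zero_even)
  have "euler_poly (2*N+1) x = (\<Sum>j\<le>N. a (2*j) + a (Suc (2*j)))"
    using euler_poly_binomial[of "Suc (2*N)" x] sum.in_pairs_0[of a N] by (simp add: a_def)
  also have "\<dots> = (\<Sum>j\<le>N. a (2*j)) + x ^ (2*N+1)"
    by (simp add: sum.distrib odd_terms)
  finally show ?thesis
    by (simp add: a_def)
qed

lemma even_polyfun_eq_coeffs:
  fixes c d :: "nat \<Rightarrow> 'a::{idom,real_normed_div_algebra}"
  assumes "\<And>x. (\<Sum>j\<le>N. c j * x ^ (2*j)) = (\<Sum>j\<le>N. d j * x ^ (2*j))"
  shows "j \<le> N \<Longrightarrow> c j = d j"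
proof -
  define spread where "spread f i = (if even i then f (i div 2) else 0)"
    for f :: "nat \<Rightarrow> 'a" and i
  have "(\<Sum>i\<le>Suc (2*N). spread f i * x ^ i) = (\<Sum>j\<le>N. f j * x ^ (2*j))" for f x
    unfolding sum.in_pairs_0 by (simp add: spread_def)
  then have "\<forall>i\<le>Suc (2*N). spread c i = spread d i"
    using assms by (simp flip: polyfun_eq_coeffs)
  then show "j \<le> N \<Longrightarrow> c j = d j"
    by (auto simp: spread_def dest: spec[of _ "2*j"])
qed

lemma euler_brace_eq:
  "euler_brace N
     = (\<lambda>j. if j \<le> N then - (of_nat (2*N+1 choose 2*j) * euler_poly (2*N+1 - 2*j) 0) else 0)"
  (is "_ = ?c")
proof -
  have c_sum: "(\<Sum>j\<le>N. ?c j * x ^ (2*j)) = x ^ (2*N+1) - euler_poly (2*N+1) x" for x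
    using euler_poly_odd_expansion[of N x] by (simp add: sum_negf)
  show ?thesis
    unfolding euler_brace_def
  proof (rule the_equality)
    show "(\<forall>x. (\<Sum>j=0..N. ?c j * x ^ (2*j)) = x ^ (2*N+1) - euler_poly (2*N+1) x)
          \<and> (\<forall>j>N. ?c j = 0)"
      using c_sum by (simp add: atLeast0AtMost)
  next
    fix c
    assume c: "(\<forall>x. (\<Sum>j=0..N. c j * x ^ (2*j)) = x ^ (2*N+1) - euler_poly (2*N+1) x)
               \<and> (\<forall>j>N. c j = 0)"
    then have "(\<Sum>j\<le>N. c j * x ^ (2*j)) = (\<Sum>j\<le>N. ?c j * x ^ (2*j))" for x
      by (simp only: c_sum atLeast0AtMost)
    then have "j \<le> N \<Longrightarrow> c j = ?c j" for j
      by (rule even_polyfun_eq_coeffs)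
    with c show "c = ?c"
      by (auto simp: not_le)
  qed
qed

theorem lemma5p7:
  fixes n :: nat
  shows "(\<Sum>i=0..n. - euler_brace n i * (-2::real) powi (- 2 * int i))
         = (-2::real) powi (- 2 * int n - 1)"
proof -
  have pow: "(-2::real) powi (- int k) = (-1/2) ^ k" for k
    by (simp add: power_int_minus power_one_over flip: power_inverse)
  have exponent: "- 2 * int n - 1 = - int (2*n+1)"
    by simp
  have "(\<Sum>i=0..n. - euler_brace n i * (-2::real) powi (- 2 * int i))
        = (\<Sum>j\<le>n. of_nat (2*n+1 choose 2*j) * euler_poly (2*n+1 - 2*j) 0 * (1/2) ^ (2*j))"
    using pow[of "2 * _"] by (simp add: euler_brace_eq atLeast0AtMost power_mult)
  also have "\<dots> = euler_poly (2*n+1) (1/2) - (1/2) ^ (2*n+1)"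
    using euler_poly_odd_expansion[of n "1/2"] by simp
  also have "\<dots> = (-1/2) ^ (2*n+1)"
    by (simp add: euler_poly_odd_half)
  also have "\<dots> = (-2::real) powi (- 2 * int n - 1)"
    unfolding exponent by (simp only: pow)
  finally show ?thesis .
qed

end
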